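(* Let $(M,g)$ be a Riemannian manifold with positive curvature operator and let $f$ be a smooth function on $M$. Then pointwise on $M$, $$R_{ijkl}R_{ik}f_jf_l\ge 0.$$
   Context: All tensors are written in components with respect to local orthonormal frames, with repeated indices summed. $R_{ijkl}$ is the Riemann curvature tensor, normalized so that $R_{ijij}$ is the sectional curvature of the plane spanned by $e_i,e_j$, and the Ricci tensor is $R_{jk}=R_{ijik}$; $f_i=\nabla_if$. The curvature operator is the symmetric operator on $2$-forms whose quadratic form is $\omega\mapsto R_{ikjl}\omega_{ik}\omega_{jl}$; "positive" means this form is positive definite. *)

theory Defs
  imports Complex_Main
begin

text \<open>Pointwise (algebraic) setting: components of tensors with respect to an
orthonormal frame of the tangent space at a point, indexed by a finite type 'n
(dimension = CARD('n)).\<close>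

definition algebraic_curvature_tensor :: "('n::finite \<Rightarrow> 'n \<Rightarrow> 'n \<Rightarrow> 'n \<Rightarrow> real) \<Rightarrow> bool" where
  "algebraic_curvature_tensor R \<longleftrightarrow>
     (\<forall>i j k l. R i j k l = - R j i k l) \<and>
     (\<forall>i j k l. R i j k l = - R i j l k) \<and>
     (\<forall>i j k l. R i j k l = R k l i j) \<and>
     (\<forall>i j k l. R i j k l + R j k i l + R k i j l = 0)"

definition ricci :: "('n::finite \<Rightarrow> 'n \<Rightarrow> 'n \<Rightarrow> 'n \<Rightarrow> real) \<Rightarrow> 'n \<Rightarrow> 'n \<Rightarrow> real" where
  "ricci R j k = (\<Sum>i\<in>UNIV. R i j i k)"

definition positive_curvature_operator :: "('n::finite \<Rightarrow> 'n \<Rightarrow> 'n \<Rightarrow> 'n \<Rightarrow> real) \<Rightarrow> bool" where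
  "positive_curvature_operator R \<longleftrightarrow>
     (\<forall>\<omega> :: 'n \<Rightarrow> 'n \<Rightarrow> real. (\<forall>i j. \<omega> i j = - \<omega> j i) \<and> \<omega> \<noteq> (\<lambda>i j. 0) \<longrightarrow>
        (\<Sum>i\<in>UNIV. \<Sum>k\<in>UNIV. \<Sum>j\<in>UNIV. \<Sum>l\<in>UNIV. R i k j l * \<omega> i k * \<omega> j l) > 0)"

end

theory Submission
  imports Defs
begin

(* Both matrices contracted in the sum are positive semidefinite. For the Jacobi operator
   T_ik = R_ijkl f_j f_l, the value T(v,v) is a quarter of the curvature operator evaluated on
   the 2-form v wedge f, and Ric(v,v) is the trace of the Jacobi operator of v, a sum of
   diagonal entries of a positive semidefinite matrix. The sum is the Frobenius product of T
   and Ric, which is nonnegative: splitting off Schur complements one diagonal entry at a time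
   writes T as a sum of squares v v^T, and each of them contributes Ric(v,v) >= 0. *)

definition quad_form :: "('n::finite \<Rightarrow> 'n \<Rightarrow> real) \<Rightarrow> ('n \<Rightarrow> real) \<Rightarrow> real" where
  "quad_form A x = (\<Sum>i\<in>UNIV. \<Sum>k\<in>UNIV. A i k * x i * x k)"

definition psd :: "('n::finite \<Rightarrow> 'n \<Rightarrow> real) \<Rightarrow> bool" where
  "psd A \<longleftrightarrow> (\<forall>i k. A i k = A k i) \<and> (\<forall>x. quad_form A x \<ge> 0)"

definition unit_vec :: "'n \<Rightarrow> 'n \<Rightarrow> real" where
  "unit_vec m i = of_bool (i = m)"

lemma sum_mult_unit_vec: "(\<Sum>i\<in>UNIV. g i * unit_vec m i) = g (m :: 'n::finite)"
  by (simp add: unit_vec_def)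

lemma sum_unit_vec_mult: "(\<Sum>i\<in>UNIV. unit_vec m i * g i) = g (m :: 'n::finite)"
  by (simp add: unit_vec_def)

lemma quad_form_add_unit_vec:
  fixes A :: "'n::finite \<Rightarrow> 'n \<Rightarrow> real"
  assumes sym: "\<And>i k. A i k = A k i"
  shows "quad_form A (\<lambda>i. x i + s * unit_vec m i)
           = quad_form A x + 2 * s * (\<Sum>i\<in>UNIV. A i m * x i) + s\<^sup>2 * A m m"
proof -
  have "quad_form A (\<lambda>i. x i + s * unit_vec m i)
      = quad_form A x + s * (\<Sum>i\<in>UNIV. \<Sum>k\<in>UNIV. A i k * x i * unit_vec m k)
        + s * (\<Sum>i\<in>UNIV. \<Sum>k\<in>UNIV. A i k * unit_vec m i * x k)
        + s\<^sup>2 * (\<Sum>i\<in>UNIV. \<Sum>k\<in>UNIV. A i k * unit_vec m i * unit_vec m k)"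
    unfolding quad_form_def
    by (simp add: algebra_simps sum.distrib sum_distrib_left power2_eq_square)
  also have "(\<Sum>i\<in>UNIV. \<Sum>k\<in>UNIV. A i k * x i * unit_vec m k) = (\<Sum>i\<in>UNIV. A i m * x i)"
    by (simp add: sum_mult_unit_vec)
  also have "(\<Sum>i\<in>UNIV. \<Sum>k\<in>UNIV. A i k * unit_vec m i * x k)
           = (\<Sum>i\<in>UNIV. unit_vec m i * (\<Sum>k\<in>UNIV. A i k * x k))"
    by (simp add: sum_distrib_left mult_ac)
  also have "\<dots> = (\<Sum>i\<in>UNIV. A i m * x i)"
    by (simp add: sum_unit_vec_mult sym)
  also have "(\<Sum>i\<in>UNIV. \<Sum>k\<in>UNIV. A i k * unit_vec m i * unit_vec m k) = A m m"
    by (simp add: sum_mult_unit_vec)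
  finally show ?thesis by simp
qed

lemma quad_form_unit_vec: "quad_form A (unit_vec m) = A m m"
  by (simp add: quad_form_def sum_mult_unit_vec)

lemma psd_diag_nonneg: "psd A \<Longrightarrow> A m m \<ge> 0"
  by (metis psd_def quad_form_unit_vec)

lemma psd_zero_diag_imp_zero_column:
  assumes "psd A" and "A m m = 0"
  shows "A j m = 0"
proof (rule ccontr)
  assume nz: "A j m \<noteq> 0"
  define s where "s = - (A j j + 1) / (2 * A j m)"
  have "quad_form A (\<lambda>i. unit_vec j i + s * unit_vec m i) = A j j + 2 * s * A j m"
    using assms quad_form_add_unit_vec[of A "unit_vec j" s m]
    by (simp add: psd_def quad_form_unit_vec sum_mult_unit_vec)
  also have "\<dots> = -1"
    using nz by (simp add: s_def field_simps)
  finally show False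
    using assms(1) unfolding psd_def by (metis neg_0_le_iff_le not_one_le_zero)
qed

lemma psd_schur_complement:
  assumes "psd A" and "A m m > 0"
  shows "psd (\<lambda>i k. A i k - A i m * A k m / A m m)"
proof -
  have sym: "\<And>i k. A i k = A k i"
    using assms(1) by (simp add: psd_def)
  have "quad_form (\<lambda>i k. A i k - A i m * A k m / A m m) x \<ge> 0" for x
  proof -
    define c where "c = (\<Sum>i\<in>UNIV. A i m * x i)"
    have "quad_form (\<lambda>i k. A i k - A i m * A k m / A m m) x = quad_form A x - c\<^sup>2 / A m m"
      unfolding quad_form_def c_def
      by (simp add: algebra_simps sum_subtractf sum_divide_distrib power2_eq_square sum_product)
    also have "\<dots> = quad_form A (\<lambda>i. x i + (- c / A m m) * unit_vec m i)"
      using quad_form_add_unit_vec[of A x "- c / A m m" m] sym assms(2)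
      by (simp add: c_def field_simps power2_eq_square)
    also have "\<dots> \<ge> 0"
      using assms(1) by (simp add: psd_def)
    finally show ?thesis .
  qed
  then show ?thesis
    unfolding psd_def using sym by (simp add: mult.commute)
qed

lemma psd_sum_of_squares_supported:
  assumes "finite S" and "psd A" and "\<And>i k. i \<notin> S \<Longrightarrow> A i k = 0"
  shows "\<exists>vs. A = (\<lambda>i k. \<Sum>v\<leftarrow>vs. v i * v k)"
  using assms
proof (induction S arbitrary: A rule: finite_induct)
  case empty
  then have "A = (\<lambda>i k. 0)" by auto
  then show ?case by (intro exI[of _ "[]"]) simp
next
  case (insert m S)
  have sym: "\<And>i k. A i k = A k i"
    using insert.prems(1) by (simp add: psd_def)
  consider "A m m = 0" | "A m m > 0"
    using psd_diag_nonneg[OF insert.prems(1), of m] by linarith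
  then show ?case
  proof cases
    case 1
    have "A i k = 0" if "i \<notin> S" for i k
      using that insert.prems psd_zero_diag_imp_zero_column[OF insert.prems(1) 1, of k] sym
      by (cases "i = m") auto
    then show ?thesis using insert.IH insert.prems(1) by blast
  next
    case 2
    define a where "a i = A i m / sqrt (A m m)" for i
    define A' where "A' i k = A i k - A i m * A k m / A m m" for i k
    have "A' i k = 0" if "i \<notin> S" for i k
    proof (cases "i = m")
      case True
      then show ?thesis using 2 sym by (simp add: A'_def)
    next
      case False
      then have "A i k = 0" "A i m = 0" using that insert.prems(2) by auto
      then show ?thesis by (simp add: A'_def)
    qed
    then obtain vs where vs: "A' = (\<lambda>i k. \<Sum>v\<leftarrow>vs. v i * v k)"
      using insert.IH psd_schur_complement[OF insert.prems(1) 2] unfolding A'_def by blast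
    have "A i k = a i * a k + A' i k" for i k
      using 2 by (simp add: a_def A'_def real_sqrt_mult[symmetric])
    then have "A = (\<lambda>i k. \<Sum>v\<leftarrow>a # vs. v i * v k)"
      by (simp add: vs fun_eq_iff)
    then show ?thesis ..
  qed
qed

lemma psd_sum_of_squares: "psd A \<Longrightarrow> \<exists>vs. A = (\<lambda>i k. \<Sum>v\<leftarrow>vs. v i * v k)"
  using psd_sum_of_squares_supported[of UNIV A] by simp

lemma frobenius_psd_nonneg:
  assumes "psd A" and "psd B"
  shows "(\<Sum>i\<in>UNIV. \<Sum>k\<in>UNIV. A i k * B i k) \<ge> 0"
proof -
  obtain vs where A: "A = (\<lambda>i k. \<Sum>v\<leftarrow>vs. v i * v k)"
    using psd_sum_of_squares[OF assms(1)] ..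
  have "(\<Sum>i\<in>UNIV. \<Sum>k\<in>UNIV. A i k * B i k) = (\<Sum>v\<leftarrow>vs. quad_form B v)"
    unfolding A quad_form_def
    by (induction vs) (simp_all add: algebra_simps sum.distrib)
  also have "\<dots> \<ge> 0"
    using assms(2) by (intro sum_list_nonneg) (auto simp: psd_def)
  finally show ?thesis .
qed

definition curvature_form ::
    "('n::finite \<Rightarrow> 'n \<Rightarrow> 'n \<Rightarrow> 'n \<Rightarrow> real) \<Rightarrow> ('n \<Rightarrow> 'n \<Rightarrow> real) \<Rightarrow> ('n \<Rightarrow> 'n \<Rightarrow> real) \<Rightarrow> real" where
  "curvature_form R \<alpha> \<beta> = (\<Sum>i\<in>UNIV. \<Sum>k\<in>UNIV. \<Sum>j\<in>UNIV. \<Sum>l\<in>UNIV. R i k j l * \<alpha> i k * \<beta> j l)"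

definition jacobi_operator ::
    "('n::finite \<Rightarrow> 'n \<Rightarrow> 'n \<Rightarrow> 'n \<Rightarrow> real) \<Rightarrow> ('n \<Rightarrow> real) \<Rightarrow> 'n \<Rightarrow> 'n \<Rightarrow> real" where
  "jacobi_operator R f i k = (\<Sum>j\<in>UNIV. \<Sum>l\<in>UNIV. R i j k l * f j * f l)"

lemma sum_skew_mult_antisymmetrization:
  fixes K \<alpha> :: "'n::finite \<Rightarrow> 'n \<Rightarrow> real"
  assumes skew: "\<And>i k. K i k = - K k i"
  shows "(\<Sum>i\<in>UNIV. \<Sum>k\<in>UNIV. K i k * (\<alpha> i k - \<alpha> k i)) = 2 * (\<Sum>i\<in>UNIV. \<Sum>k\<in>UNIV. K i k * \<alpha> i k)"
proof -
  have "(\<Sum>i\<in>UNIV. \<Sum>k\<in>UNIV. K i k * \<alpha> k i) = (\<Sum>k\<in>UNIV. \<Sum>i\<in>UNIV. K i k * \<alpha> k i)"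
    by (rule sum.swap)
  also have "\<dots> = - (\<Sum>k\<in>UNIV. \<Sum>i\<in>UNIV. K k i * \<alpha> k i)"
    by (subst skew) (simp add: sum_negf)
  finally show ?thesis
    by (simp add: algebra_simps sum_subtractf)
qed

lemma curvature_form_antisymmetrization:
  assumes skew12: "\<And>i j k l. R i j k l = - R j i k l"
    and skew34: "\<And>i j k l. R i j k l = - R i j l k"
  shows "curvature_form R (\<lambda>i k. \<alpha> i k - \<alpha> k i) (\<lambda>i k. \<alpha> i k - \<alpha> k i) = 4 * curvature_form R \<alpha> \<alpha>"
proof -
  define C where "C i k = (\<Sum>j\<in>UNIV. \<Sum>l\<in>UNIV. R i k j l * \<alpha> j l)" for i k
  have C_skew: "C i k = - C k i" for i k
    unfolding C_def by (subst skew12) (simp add: sum_negf)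
  have "curvature_form R (\<lambda>i k. \<alpha> i k - \<alpha> k i) (\<lambda>i k. \<alpha> i k - \<alpha> k i)
      = (\<Sum>i\<in>UNIV. \<Sum>k\<in>UNIV. (\<Sum>j\<in>UNIV. \<Sum>l\<in>UNIV. R i k j l * (\<alpha> j l - \<alpha> l j)) * (\<alpha> i k - \<alpha> k i))"
    unfolding curvature_form_def sum_distrib_right by (simp only: mult.commute mult.left_commute)
  also have "\<dots> = (\<Sum>i\<in>UNIV. \<Sum>k\<in>UNIV. 2 * C i k * (\<alpha> i k - \<alpha> k i))"
  proof -
    have "(\<Sum>j\<in>UNIV. \<Sum>l\<in>UNIV. R i k j l * (\<alpha> j l - \<alpha> l j)) = 2 * C i k" for i k
      unfolding C_def by (rule sum_skew_mult_antisymmetrization) (rule skew34)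
    then show ?thesis by simp
  qed
  also have "\<dots> = 4 * (\<Sum>i\<in>UNIV. \<Sum>k\<in>UNIV. C i k * \<alpha> i k)"
    using sum_skew_mult_antisymmetrization[of C, OF C_skew]
    by (simp add: mult.assoc sum_distrib_left[symmetric])
  also have "\<dots> = 4 * curvature_form R \<alpha> \<alpha>"
    unfolding curvature_form_def C_def by (simp add: sum_distrib_left mult_ac)
  finally show ?thesis .
qed

lemma curvature_form_nonneg:
  assumes "positive_curvature_operator R" and "\<And>i k. \<omega> i k = - \<omega> k i"
  shows "curvature_form R \<omega> \<omega> \<ge> 0"
proof (cases "\<omega> = (\<lambda>i k. 0)")
  case True
  then show ?thesis by (simp add: curvature_form_def)
next
  case False
  then have "curvature_form R \<omega> \<omega> > 0"
    using assms unfolding positive_curvature_operator_def curvature_form_def by blast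
  then show ?thesis by simp
qed

lemma quad_form_jacobi_operator:
  "quad_form (jacobi_operator R f) v = curvature_form R (\<lambda>i k. v i * f k) (\<lambda>i k. v i * f k)"
proof -
  have "quad_form (jacobi_operator R f) v
      = (\<Sum>i\<in>UNIV. \<Sum>k\<in>UNIV. \<Sum>j\<in>UNIV. \<Sum>l\<in>UNIV. R i j k l * (v i * f j) * (v k * f l))"
    unfolding quad_form_def jacobi_operator_def
    by (intro sum.cong refl) (simp add: sum_distrib_left sum_distrib_right mult_ac)
  also have "\<dots> = curvature_form R (\<lambda>i k. v i * f k) (\<lambda>i k. v i * f k)"
    unfolding curvature_form_def by (intro sum.cong refl sum.swap)
  finally show ?thesis .
qed

lemma psd_jacobi_operator:
  assumes skew12: "\<And>i j k l. R i j k l = - R j i k l"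
    and skew34: "\<And>i j k l. R i j k l = - R i j l k"
    and pair_sym: "\<And>i j k l. R i j k l = R k l i j"
    and "positive_curvature_operator R"
  shows "psd (jacobi_operator R f)"
  unfolding psd_def
proof (intro allI conjI)
  fix i k
  have "jacobi_operator R f k i = (\<Sum>l\<in>UNIV. \<Sum>j\<in>UNIV. R i j k l * f j * f l)"
    unfolding jacobi_operator_def by (subst pair_sym) (simp add: mult_ac)
  also have "\<dots> = jacobi_operator R f i k"
    unfolding jacobi_operator_def by (rule sum.swap)
  finally show "jacobi_operator R f i k = jacobi_operator R f k i" ..
next
  fix v
  have "4 * quad_form (jacobi_operator R f) v
      = curvature_form R (\<lambda>i k. v i * f k - v k * f i) (\<lambda>i k. v i * f k - v k * f i)"
    using curvature_form_antisymmetrization[OF skew12 skew34, where \<alpha>="\<lambda>i k. v i * f k"]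
    by (simp add: quad_form_jacobi_operator)
  also have "\<dots> \<ge> 0"
    by (rule curvature_form_nonneg[OF assms(4)]) simp
  finally show "quad_form (jacobi_operator R f) v \<ge> 0"
    by simp
qed

lemma quad_form_ricci: "quad_form (ricci R) v = (\<Sum>p\<in>UNIV. jacobi_operator R v p p)"
proof -
  have "quad_form (ricci R) v = (\<Sum>i\<in>UNIV. \<Sum>k\<in>UNIV. \<Sum>p\<in>UNIV. R p i p k * v i * v k)"
    unfolding quad_form_def ricci_def by (simp add: sum_distrib_right)
  also have "\<dots> = (\<Sum>i\<in>UNIV. \<Sum>p\<in>UNIV. \<Sum>k\<in>UNIV. R p i p k * v i * v k)"
    by (intro sum.cong refl sum.swap)
  also have "\<dots> = (\<Sum>p\<in>UNIV. \<Sum>i\<in>UNIV. \<Sum>k\<in>UNIV. R p i p k * v i * v k)"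
    by (rule sum.swap)
  also have "\<dots> = (\<Sum>p\<in>UNIV. jacobi_operator R v p p)"
    unfolding jacobi_operator_def ..
  finally show ?thesis .
qed

lemma psd_ricci:
  assumes "\<And>i j k l. R i j k l = - R j i k l"
    and "\<And>i j k l. R i j k l = - R i j l k"
    and pair_sym: "\<And>i j k l. R i j k l = R k l i j"
    and "positive_curvature_operator R"
  shows "psd (ricci R)"
proof -
  have "ricci R i k = ricci R k i" for i k
    unfolding ricci_def by (subst pair_sym) simp
  moreover have "quad_form (ricci R) v \<ge> 0" for v
    unfolding quad_form_ricci
    using psd_diag_nonneg[OF psd_jacobi_operator[OF assms]] by (simp add: sum_nonneg)
  ultimately show ?thesis
    by (simp add: psd_def)
qed

theorem lemma5:
  fixes R :: "'n::finite \<Rightarrow> 'n \<Rightarrow> 'n \<Rightarrow> 'n \<Rightarrow> real" and df :: "'n \<Rightarrow> real"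
  assumes "algebraic_curvature_tensor R"
    and "positive_curvature_operator R"
  shows "(\<Sum>i\<in>UNIV. \<Sum>j\<in>UNIV. \<Sum>k\<in>UNIV. \<Sum>l\<in>UNIV.
            R i j k l * ricci R i k * df j * df l) \<ge> 0"
proof -
  have curvature: "\<And>i j k l. R i j k l = - R j i k l" "\<And>i j k l. R i j k l = - R i j l k"
    "\<And>i j k l. R i j k l = R k l i j" "positive_curvature_operator R"
    using assms unfolding algebraic_curvature_tensor_def by blast+
  have "(\<Sum>i\<in>UNIV. \<Sum>j\<in>UNIV. \<Sum>k\<in>UNIV. \<Sum>l\<in>UNIV. R i j k l * ricci R i k * df j * df l)
      = (\<Sum>i\<in>UNIV. \<Sum>k\<in>UNIV. \<Sum>j\<in>UNIV. \<Sum>l\<in>UNIV. R i j k l * ricci R i k * df j * df l)"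
    by (intro sum.cong refl sum.swap)
  also have "\<dots> = (\<Sum>i\<in>UNIV. \<Sum>k\<in>UNIV. jacobi_operator R df i k * ricci R i k)"
    unfolding jacobi_operator_def
    by (intro sum.cong refl) (simp add: sum_distrib_left sum_distrib_right mult_ac)
  also have "\<dots> \<ge> 0"
    by (rule frobenius_psd_nonneg[OF psd_jacobi_operator[OF curvature] psd_ricci[OF curvature]])
  finally show ?thesis .
qed

end
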